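(* Let $Y$ be a sober space and let $X=\{y\in Y\mid \forall i\in I,\ y\in U_i\Rightarrow y\in V_i\}$ for some family $(U_i,V_i)_{i\in I}$ (of arbitrary cardinality) of pairs of open subsets of $Y$. Then $X$, with the subspace topology, is sober. In particular, every LCS-complete space is sober.
   Context: A space is sober if every irreducible closed subset is the closure of a unique point. A space is LCS-complete if it is homeomorphic to a $G_\delta$ subset (countable intersection of open sets), with the subspace topology, of some locally compact sober space, where locally compact means every point has a neighborhood base of compact saturated sets (no separation assumed). *)

theory Defs
  imports "HOL-Analysis.Analysis"
begin

definition irreducible_in :: "'a topology \<Rightarrow> 'a set \<Rightarrow> bool" where
  "irreducible_in Y S \<longleftrightarrow> S \<subseteq> topspace Y \<and> S \<noteq> {} \<and>
     (\<forall>A B. closedin Y A \<and> closedin Y B \<and> S \<subseteq> A \<union> B \<longrightarrow> S \<subseteq> A \<or> S \<subseteq> B)"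

definition sober_space :: "'a topology \<Rightarrow> bool" where
  "sober_space Y \<longleftrightarrow> (\<forall>S. closedin Y S \<and> irreducible_in Y S \<longrightarrow>
      (\<exists>!x. x \<in> topspace Y \<and> Y closure_of {x} = S))"

definition saturated_in :: "'a topology \<Rightarrow> 'a set \<Rightarrow> bool" where
  "saturated_in Y K \<longleftrightarrow> K \<subseteq> topspace Y \<and>
     K = topspace Y \<inter> \<Inter>{U. openin Y U \<and> K \<subseteq> U}"

definition locally_compact_sat :: "'a topology \<Rightarrow> bool" where
  "locally_compact_sat Y \<longleftrightarrow> (\<forall>x \<in> topspace Y. \<forall>U. openin Y U \<and> x \<in> U \<longrightarrow>
     (\<exists>K. compactin Y K \<and> saturated_in Y K \<and> x \<in> Y interior_of K \<and> K \<subseteq> U))"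

end

theory Submission
  imports Defs
begin

text \<open>A space is sober iff it is $T_0$ and every irreducible closed set has a generic point.
  $T_0$ passes to subspaces. If $S$ is irreducible and closed in $X$, its closure in $Y$ is
  irreducible, with a generic point $y$; it remains to see $y \in X$. If $y \in U_i$ then, as
  $y \in \overline{S}$, the open set $U_i$ meets $S \subseteq X$ in some $s$, so $s \in V_i$; as
  $s \in \overline{\{y\}}$, the open set $V_i$ contains $y$. A $G_\delta$ set is the case
  $U_i = Y$, and local compactness plays no role.\<close>

lemma irreducible_in_sing: "x \<in> topspace Y \<Longrightarrow> irreducible_in Y {x}"
  by (auto simp: irreducible_in_def)

lemma irreducible_in_closure_of:
  assumes "irreducible_in Y S"
  shows "irreducible_in Y (Y closure_of S)"
  unfolding irreducible_in_def
proof (intro conjI allI impI)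
  have S: "S \<subseteq> topspace Y" "S \<noteq> {}"
    using assms by (auto simp: irreducible_in_def)
  show "Y closure_of S \<subseteq> topspace Y"
    by (rule closure_of_subset_topspace)
  show "Y closure_of S \<noteq> {}"
    using S closure_of_subset by blast
  fix A B assume AB: "closedin Y A \<and> closedin Y B \<and> Y closure_of S \<subseteq> A \<union> B"
  then have "S \<subseteq> A \<union> B"
    using closure_of_subset[OF S(1)] by blast
  then have "S \<subseteq> A \<or> S \<subseteq> B"
    using assms AB unfolding irreducible_in_def by blast
  then show "Y closure_of S \<subseteq> A \<or> Y closure_of S \<subseteq> B"
    using AB closure_of_minimal by blast
qed

lemma irreducible_in_continuous_map_image:
  assumes f: "continuous_map X Y f" and S: "irreducible_in X S"
  shows "irreducible_in Y (f ` S)"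
  unfolding irreducible_in_def
proof (intro conjI allI impI)
  show "f ` S \<subseteq> topspace Y" "f ` S \<noteq> {}"
    using S continuous_map_image_subset_topspace[OF f] by (auto simp: irreducible_in_def)
  fix A B assume AB: "closedin Y A \<and> closedin Y B \<and> f ` S \<subseteq> A \<union> B"
  have "closedin X {x \<in> topspace X. f x \<in> A}" "closedin X {x \<in> topspace X. f x \<in> B}"
    using AB f closedin_continuous_map_preimage by blast+
  moreover have "S \<subseteq> {x \<in> topspace X. f x \<in> A} \<union> {x \<in> topspace X. f x \<in> B}"
    using AB S by (auto simp: irreducible_in_def)
  ultimately have "S \<subseteq> {x \<in> topspace X. f x \<in> A} \<or> S \<subseteq> {x \<in> topspace X. f x \<in> B}"
    using S unfolding irreducible_in_def by blast
  then show "f ` S \<subseteq> A \<or> f ` S \<subseteq> B" by auto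
qed

lemma irreducible_in_from_subtopology:
  "irreducible_in (subtopology Y X) S \<Longrightarrow> irreducible_in Y S"
  using irreducible_in_continuous_map_image[OF continuous_map_id_subt] by simp

lemma sober_space_imp_generic_point:
  assumes "sober_space Y" "closedin Y S" "irreducible_in Y S"
  obtains x where "x \<in> topspace Y" "Y closure_of {x} = S"
  using assms unfolding sober_space_def by blast

lemma sober_imp_t0_space:
  assumes "sober_space Y"
  shows "t0_space Y"
  unfolding t0_space_closure_of_sing
proof (intro ballI impI)
  fix x y assume x: "x \<in> topspace Y" and y: "y \<in> topspace Y"
    and eq: "Y closure_of {x} = Y closure_of {y}"
  have "\<exists>!z. z \<in> topspace Y \<and> Y closure_of {z} = Y closure_of {x}"
    using assms irreducible_in_closure_of[OF irreducible_in_sing[OF x]]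
    unfolding sober_space_def by simp
  then show "x = y"
    using x y eq by blast
qed

lemma sober_spaceI:
  assumes "t0_space Y"
    and "\<And>S. closedin Y S \<Longrightarrow> irreducible_in Y S \<Longrightarrow> \<exists>x\<in>topspace Y. Y closure_of {x} = S"
  shows "sober_space Y"
  unfolding sober_space_def
proof (intro allI impI)
  fix S assume "closedin Y S \<and> irreducible_in Y S"
  then obtain x where "x \<in> topspace Y" "Y closure_of {x} = S"
    using assms(2) by blast
  with assms(1) show "\<exists>!x. x \<in> topspace Y \<and> Y closure_of {x} = S"
    unfolding t0_space_closure_of_sing by blast
qed

lemma sober_space_homeomorphic_map:
  assumes hom: "homeomorphic_map X Y f" and sob: "sober_space Y"
  shows "sober_space X"
proof (rule sober_spaceI)
  show "t0_space X"
    using homeomorphic_t0_space[OF homeomorphic_map_imp_homeomorphic_space[OF hom]]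
      sober_imp_t0_space[OF sob] by simp
next
  fix S assume S: "closedin X S" "irreducible_in X S"
  have SX: "S \<subseteq> topspace X"
    using S closedin_subset by blast
  have "closedin Y (f ` S)"
    using S hom homeomorphic_map_closedness_eq by blast
  moreover have "irreducible_in Y (f ` S)"
    using S(2) homeomorphic_imp_continuous_map[OF hom] by (rule irreducible_in_continuous_map_image[rotated])
  ultimately obtain y where y: "y \<in> topspace Y" "Y closure_of {y} = f ` S"
    using sober_space_imp_generic_point[OF sob] by blast
  then obtain x where x: "x \<in> topspace X" "y = f x"
    using homeomorphic_imp_surjective_map[OF hom] by blast
  have "f ` (X closure_of {x}) = f ` S"
    using homeomorphic_map_closure_of[OF hom, of "{x}"] x y by simp
  then have "X closure_of {x} = S"
    using homeomorphic_imp_injective_map[OF hom] SX closure_of_subset_topspace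
    by (metis inj_on_image_eq_iff)
  then show "\<exists>x\<in>topspace X. X closure_of {x} = S"
    using x by blast
qed

lemma homeomorphic_sober_space:
  assumes "X homeomorphic_space Y"
  shows "sober_space X \<longleftrightarrow> sober_space Y"
proof -
  obtain f where f: "homeomorphic_map X Y f"
    using assms unfolding homeomorphic_space by blast
  obtain g where g: "homeomorphic_map Y X g"
    using homeomorphic_space_sym[THEN iffD1, OF assms] unfolding homeomorphic_space by blast
  show ?thesis
    using sober_space_homeomorphic_map[OF f] sober_space_homeomorphic_map[OF g] by blast
qed

lemma sober_space_subtopology:
  assumes sob: "sober_space Y"
    and generic: "\<And>S y. S \<subseteq> X \<Longrightarrow> y \<in> topspace Y \<Longrightarrow> Y closure_of {y} = Y closure_of S \<Longrightarrow> y \<in> X"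
  shows "sober_space (subtopology Y X)"
proof (rule sober_spaceI)
  show "t0_space (subtopology Y X)"
    using sober_imp_t0_space[OF sob] by (rule t0_space_subtopology)
next
  fix S assume S: "closedin (subtopology Y X) S" "irreducible_in (subtopology Y X) S"
  have SX: "S \<subseteq> X"
    using closedin_subset[OF S(1)] by auto
  have "irreducible_in Y (Y closure_of S)"
    using irreducible_in_from_subtopology[OF S(2)] by (rule irreducible_in_closure_of)
  then obtain y where y: "y \<in> topspace Y" "Y closure_of {y} = Y closure_of S"
    using sober_space_imp_generic_point[OF sob closedin_closure_of] by blast
  have yX: "y \<in> X"
    using generic[OF SX y] .
  have "subtopology Y X closure_of {y} = X \<inter> Y closure_of {y}"
    using yX by (simp add: closure_of_subtopology)
  also have "\<dots> = X \<inter> Y closure_of S"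
    using y(2) by simp
  also have "\<dots> = subtopology Y X closure_of S"
    using SX by (simp add: closure_of_subtopology Int_absorb1)
  also have "\<dots> = S"
    using S(1) by (rule closure_of_closedin)
  finally show "\<exists>x\<in>topspace (subtopology Y X). subtopology Y X closure_of {x} = S"
    using y(1) yX by auto
qed

lemma generic_point_mem_implication_set:
  assumes opn: "\<forall>i\<in>I. openin Y (U i) \<and> openin Y (V i)"
    and SX: "S \<subseteq> {y \<in> topspace Y. \<forall>i\<in>I. y \<in> U i \<longrightarrow> y \<in> V i}"
    and y: "y \<in> topspace Y" and cl: "Y closure_of {y} = Y closure_of S"
  shows "y \<in> {y \<in> topspace Y. \<forall>i\<in>I. y \<in> U i \<longrightarrow> y \<in> V i}"
proof (intro CollectI conjI ballI impI y)
  fix i assume i: "i \<in> I" "y \<in> U i"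
  have "y \<in> Y closure_of S"
    using cl closure_of_subset[of "{y}" Y] y by auto
  then obtain s where s: "s \<in> S" "s \<in> U i"
    using opn i unfolding in_closure_of by blast
  then have "s \<in> V i" "s \<in> Y closure_of {y}"
    using SX i closure_of_subset[of S Y] cl by auto
  then show "y \<in> V i"
    using opn i unfolding in_closure_of by blast
qed

lemma sober_space_subtopology_implication_set:
  assumes "sober_space Y" "\<forall>i\<in>I. openin Y (U i) \<and> openin Y (V i)"
  shows "sober_space (subtopology Y {y \<in> topspace Y. \<forall>i\<in>I. y \<in> U i \<longrightarrow> y \<in> V i})"
  using assms by (intro sober_space_subtopology generic_point_mem_implication_set)

lemma sober_space_subtopology_gdelta:
  assumes sob: "sober_space Y" and G: "gdelta_in Y G"
  shows "sober_space (subtopology Y G)"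
proof -
  obtain \<U> where \<U>: "\<U> \<subseteq> Collect (openin Y)" "G = topspace Y \<inter> \<Inter>\<U>"
    using G unfolding gdelta_in_def relative_to_def intersection_of_def by blast
  then have "G = {y \<in> topspace Y. \<forall>W\<in>\<U>. y \<in> topspace Y \<longrightarrow> y \<in> id W}"
    by auto
  moreover have "\<forall>W\<in>\<U>. openin Y (topspace Y) \<and> openin Y (id W)"
    using \<U> by auto
  ultimately show ?thesis
    using sober_space_subtopology_implication_set[OF sob, of \<U> "\<lambda>_. topspace Y" id] by simp
qed

theorem proposition7p1:
  shows "(\<forall>(Y :: 'a topology) (I :: 'i set) (U :: 'i \<Rightarrow> 'a set) V.
            sober_space Y \<and> (\<forall>i\<in>I. openin Y (U i) \<and> openin Y (V i)) \<longrightarrow>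
            sober_space (subtopology Y {y \<in> topspace Y. \<forall>i\<in>I. y \<in> U i \<longrightarrow> y \<in> V i}))
       \<and> (\<forall>(X :: 'b topology) (Y :: 'c topology) G.
            locally_compact_sat Y \<and> sober_space Y \<and> gdelta_in Y G \<and>
            X homeomorphic_space subtopology Y G \<longrightarrow> sober_space X)"
proof (intro conjI allI impI)
  fix Y :: "'a topology" and I :: "'i set" and U :: "'i \<Rightarrow> 'a set" and V
  assume "sober_space Y \<and> (\<forall>i\<in>I. openin Y (U i) \<and> openin Y (V i))"
  then show "sober_space (subtopology Y {y \<in> topspace Y. \<forall>i\<in>I. y \<in> U i \<longrightarrow> y \<in> V i})"
    by (intro sober_space_subtopology_implication_set) auto
next
  fix X :: "'b topology" and Y :: "'c topology" and G
  assume "locally_compact_sat Y \<and> sober_space Y \<and> gdelta_in Y G \<and>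
            X homeomorphic_space subtopology Y G"
  then show "sober_space X"
    using sober_space_subtopology_gdelta homeomorphic_sober_space by blast
qed

end
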